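(* Let $E,F$ be Banach spaces, $a\in E$, $1\le p,q<\infty$, and let $f:E\rightarrow F$ be absolutely $(p;q)$-summing at $a$. Then for every sequence $(x_{j})_{j=1}^{\infty}\in l_{q}^{u}(E)$ one has $(f(a+x_{j})-f(a))_{j=1}^{\infty}\in l_{p}(F)$.
   Context: For a sequence $(x_j)$ in $E$, $\Vert(x_{j})_{j}\Vert_{w,q}:=\sup_{\varphi\in B_{E'}}(\sum_{j}|\varphi(x_{j})|^{q})^{1/q}$; $l_q^w(E)$ is the space of sequences with this quantity finite, and $l_{q}^{u}(E)$ is the subspace of those with $\lim_{m\to\infty}\Vert(x_{j})_{j=m}^{\infty}\Vert_{w,q}=0$ (unconditionally $q$-summable sequences). $l_p(F)$ is the space of sequences $(y_j)$ in $F$ with $\sum_j\Vert y_j\Vert^p<\infty$. An arbitrary mapping $f:E\to F$ is called absolutely $(p;q)$-summing at $a$ if there exist $M_a,\delta_a,r_a>0$ with $\sum_{j=1}^{k}\Vert f(a+x_{j})-f(a)\Vert^{p}\leq M_{a}\Vert(x_{j})_{j=1}^{k}\Vert_{w,q}^{r_{a}}$ for all $k$ and all $x_1,\dots,x_k\in E$ with $\Vert(x_{j})_{j=1}^{k}\Vert_{w,q}<\delta_{a}$. *)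

theory Defs
  imports "HOL-Analysis.Analysis"
begin

definition dual_ball :: "('a::real_normed_vector \<Rightarrow> real) set" where
  "dual_ball = {\<phi>. bounded_linear \<phi> \<and> onorm \<phi> \<le> 1}"

definition weak_norm_fin :: "real \<Rightarrow> (nat \<Rightarrow> 'a::real_normed_vector) \<Rightarrow> nat \<Rightarrow> real" where
  "weak_norm_fin q x k = (SUP \<phi>\<in>dual_ball. (\<Sum>j<k. \<bar>\<phi> (x j)\<bar> powr q) powr (1/q))"

text \<open>Weak q-norm of the tail (x_j) for j >= m, possibly infinite; the infinite
  sum of nonnegative terms is written as the supremum of its partial sums.\<close>
definition weak_norm_tail :: "real \<Rightarrow> (nat \<Rightarrow> 'a::real_normed_vector) \<Rightarrow> nat \<Rightarrow> ereal" where
  "weak_norm_tail q x m =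
     (SUP \<phi>\<in>dual_ball. SUP n. ereal ((\<Sum>j\<in>{m..<n}. \<bar>\<phi> (x j)\<bar> powr q) powr (1/q)))"

definition lqu :: "real \<Rightarrow> (nat \<Rightarrow> 'a::real_normed_vector) set" where
  "lqu q = {x. weak_norm_tail q x 0 < \<infinity> \<and> (weak_norm_tail q x \<longlonglongrightarrow> 0)}"

definition lp :: "real \<Rightarrow> (nat \<Rightarrow> 'b::real_normed_vector) set" where
  "lp p = {y. summable (\<lambda>j. norm (y j) powr p)}"

definition abs_summing_at ::
  "real \<Rightarrow> real \<Rightarrow> ('a::real_normed_vector \<Rightarrow> 'b::real_normed_vector) \<Rightarrow> 'a \<Rightarrow> bool" where
  "abs_summing_at p q f a \<longleftrightarrow>
     (\<exists>M \<delta> r. M > 0 \<and> \<delta> > 0 \<and> r > 0 \<and>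
        (\<forall>k (x::nat \<Rightarrow> 'a). weak_norm_fin q x k < \<delta> \<longrightarrow>
           (\<Sum>j<k. norm (f (a + x j) - f a) powr p) \<le> M * weak_norm_fin q x k powr r))"

end

theory Submission
  imports Defs
begin

text \<open>Since the tails of \<open>x\<close> have weak \<open>q\<close>-norm tending to \<open>0\<close>, some shifted sequence
  \<open>(x\<^sub>j\<^sub>+\<^sub>m)\<close> has all its finite weak \<open>q\<close>-norms below the radius \<open>\<delta>\<close> of the summing
  condition at \<open>a\<close>. That condition then bounds every partial sum of
  \<open>\<parallel>f(a + x\<^sub>j\<^sub>+\<^sub>m) - f(a)\<parallel>\<^sup>p\<close> by the same constant, so the series converges.\<close>

lemma zero_in_dual_ball: "(\<lambda>_. 0) \<in> dual_ball"
  unfolding dual_ball_def by (simp add: onorm_zero)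

text \<open>Even nonnegativity needs the bound: the real \<open>SUP\<close> of an unbounded set is an
  unspecified value.\<close>

lemma weak_norm_fin_bounds:
  assumes "\<And>\<phi>. \<phi> \<in> dual_ball \<Longrightarrow> (\<Sum>j<k. \<bar>\<phi> (x j)\<bar> powr q) powr (1/q) \<le> c"
  shows "0 \<le> weak_norm_fin q x k" and "weak_norm_fin q x k \<le> c"
proof -
  have "bdd_above ((\<lambda>\<phi>. (\<Sum>j<k. \<bar>\<phi> (x j)\<bar> powr q) powr (1/q)) ` dual_ball)"
    using assms by (intro bdd_aboveI2[where M = c])
  then have "(\<Sum>j<k. \<bar>(\<lambda>_. 0::real) (x j)\<bar> powr q) powr (1/q) \<le> weak_norm_fin q x k"
    unfolding weak_norm_fin_def by (rule cSUP_upper[OF zero_in_dual_ball])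
  then show "0 \<le> weak_norm_fin q x k"
    by simp
  show "weak_norm_fin q x k \<le> c"
    unfolding weak_norm_fin_def using zero_in_dual_ball assms by (intro cSUP_least) auto
qed

lemma weak_norm_fin_shift_bounds:
  assumes "weak_norm_tail q x m \<le> ereal c"
  shows "0 \<le> weak_norm_fin q (\<lambda>j. x (j + m)) k" and "weak_norm_fin q (\<lambda>j. x (j + m)) k \<le> c"
proof -
  have "(\<Sum>j<k. \<bar>\<phi> (x (j + m))\<bar> powr q) powr (1/q) \<le> c" if "\<phi> \<in> dual_ball" for \<phi>
  proof -
    have "(\<Sum>j<k. \<bar>\<phi> (x (j + m))\<bar> powr q) = (\<Sum>j\<in>{m..<k + m}. \<bar>\<phi> (x j)\<bar> powr q)"
      using sum.shift_bounds_nat_ivl[of "\<lambda>j. \<bar>\<phi> (x j)\<bar> powr q" 0 m k]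
      by (simp add: lessThan_atLeast0)
    moreover have "ereal ((\<Sum>j\<in>{m..<k + m}. \<bar>\<phi> (x j)\<bar> powr q) powr (1/q)) \<le> weak_norm_tail q x m"
      unfolding weak_norm_tail_def by (rule SUP_upper2[OF that], rule SUP_upper) simp
    ultimately show ?thesis
      using assms by (metis ereal_less_eq(3) order_trans)
  qed
  then show "0 \<le> weak_norm_fin q (\<lambda>j. x (j + m)) k" and "weak_norm_fin q (\<lambda>j. x (j + m)) k \<le> c"
    by (fact weak_norm_fin_bounds)+
qed

lemma abs_summing_at_summable_if_weakly_small:
  assumes "abs_summing_at p q f a"
  obtains \<delta> where "\<delta> > 0"
    and "\<And>y. (\<And>k. 0 \<le> weak_norm_fin q y k \<and> weak_norm_fin q y k \<le> \<delta>) \<Longrightarrow>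
           summable (\<lambda>j. norm (f (a + y j) - f a) powr p)"
proof -
  obtain M \<delta> r where "M > 0" "\<delta> > 0" "r > 0" and summing:
    "\<And>k y. weak_norm_fin q y k < \<delta> \<Longrightarrow>
       (\<Sum>j<k. norm (f (a + y j) - f a) powr p) \<le> M * weak_norm_fin q y k powr r"
    using assms unfolding abs_summing_at_def by blast
  have "summable (\<lambda>j. norm (f (a + y j) - f a) powr p)"
    if small: "\<And>k. 0 \<le> weak_norm_fin q y k \<and> weak_norm_fin q y k \<le> \<delta>/2" for y
  proof (rule bounded_imp_summable)
    fix n
    have "(\<Sum>j<Suc n. norm (f (a + y j) - f a) powr p) \<le> M * weak_norm_fin q y (Suc n) powr r"
      using small[of "Suc n"] \<open>\<delta> > 0\<close> by (intro summing) linarith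
    also have "\<dots> \<le> M * (\<delta>/2) powr r"
      using small[of "Suc n"] \<open>M > 0\<close> \<open>r > 0\<close> by (simp add: powr_mono2)
    finally show "(\<Sum>j\<le>n. norm (f (a + y j) - f a) powr p) \<le> M * (\<delta>/2) powr r"
      by (simp add: lessThan_Suc_atMost)
  qed simp
  then show thesis
    using that[of "\<delta>/2"] \<open>\<delta> > 0\<close> by simp
qed

theorem mainTheorem2:
  fixes f :: "'a::banach \<Rightarrow> 'b::banach" and a :: 'a and p q :: real
  assumes "1 \<le> p" and "1 \<le> q"
    and "abs_summing_at p q f a"
    and "x \<in> lqu q"
  shows "(\<lambda>j. f (a + x j) - f a) \<in> lp p"
proof -
  obtain \<delta> where "\<delta> > 0" and summable_if_small:
    "\<And>y. (\<And>k. 0 \<le> weak_norm_fin q y k \<and> weak_norm_fin q y k \<le> \<delta>) \<Longrightarrow>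
       summable (\<lambda>j. norm (f (a + y j) - f a) powr p)"
    using abs_summing_at_summable_if_weakly_small[OF assms(3)] by blast
  have tails_vanish: "weak_norm_tail q x \<longlonglongrightarrow> 0"
    using assms(4) unfolding lqu_def by blast
  have "ereal \<delta> > 0"
    using \<open>\<delta> > 0\<close> by simp
  from order_tendstoD(2)[OF tails_vanish this]
  obtain m where "weak_norm_tail q x m < ereal \<delta>"
    unfolding eventually_sequentially by auto
  then have "summable (\<lambda>j. norm (f (a + x (j + m)) - f a) powr p)"
    using weak_norm_fin_shift_bounds[of q x m \<delta>] by (intro summable_if_small) simp
  then show ?thesis
    unfolding lp_def using summable_iff_shift[of "\<lambda>j. norm (f (a + x j) - f a) powr p"] by simp
qed

end
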